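(* In the setting below, fix an assignment matrix $A$ for which event $\mathcal A$ holds, and suppose $$np^2\ \ge\ \frac{30\cdot 12^2\,e^{4\kappa}}{\gamma^2}\log m .$$ Then, with probability at least $1-\exp\!\big(-\frac{\gamma^2np^2}{10\cdot12^2\cdot e^{4\kappa}}\big)$ over the random responses, $$\mu^*(P^* )-\|P-P^*\|_2\ \ge\ \frac{\gamma}{6e^{2\kappa}} .$$
   Context: Setting. Let $n\ge1$ (number of users) and $m\ge2$ (number of items). Fix user parameters $\theta^*_1,\dots,\theta^*_n\in\mathbb R$ and item parameters $\beta^*_1,\dots,\beta^*_m\in\mathbb R$; let $\kappa=\max_i\beta^*_i-\min_i\beta^*_i$ and $\pi^*_i=e^{\beta^*_i}/\sum_ke^{\beta^*_k}$. The responses $X_{li}\in\{0,1\}$ are independent with $\Pr(X_{li}=1)=e^{\theta^*_l}/(e^{\theta^*_l}+e^{\beta^*_i})$. Let $\gamma=\min_{l\in[n],\,i\ne j\in[m]}\mathbb E[X_{li}(1-X_{lj})]$. For an assignment matrix $A\in\{0,1\}^{n\times m}$ and $p\in(0,1]$, let $B=A^\top A$, $d=\frac32mnp^2$, and define $m\times m$ matrices $P,P^*$ by, for $i\ne j$, $P_{ij}=\frac1d\sum_{l=1}^nA_{li}A_{lj}X_{li}(1-X_{lj})$, $P^*_{ij}=\frac1d\sum_{l=1}^nA_{li}A_{lj}\mathbb E[X_{li}(1-X_{lj})]$, and $P_{ii}=1-\sum_{k\ne i}P_{ik}$, $P^*_{ii}=1-\sum_{k\ne i}P^*_{ik}$;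 $P^*$ is reversible with respect to $\pi^*$. Event $\mathcal A$: $\frac12np^2\le B_{ij}\le\frac32np^2$ for all $i\ne j$. For a stochastic matrix $M$ reversible with respect to a positive probability vector (eigenvalues real, $1=\lambda_1\ge\lambda_2\ge\dots\ge\lambda_m$), the spectral gap is $\mu^*(M)=1-\max\{|\lambda_2|,|\lambda_m|\}$. $\|\cdot\|_2$ for matrices is the spectral norm. *)

theory Defs
  imports "HOL-Probability.Product_PMF" "Jordan_Normal_Form.Char_Poly"
begin

text \<open>Users are indexed by l < n, items by i < m. Matrices are functions nat => nat => real
  whose entries outside [m] x [m] are irrelevant.\<close>

definition resp_prob :: "(nat \<Rightarrow> real) \<Rightarrow> (nat \<Rightarrow> real) \<Rightarrow> nat \<Rightarrow> nat \<Rightarrow> real" where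
  "resp_prob \<theta> \<beta> l i = exp (\<theta> l) / (exp (\<theta> l) + exp (\<beta> i))"

definition kappa :: "nat \<Rightarrow> (nat \<Rightarrow> real) \<Rightarrow> real" where
  "kappa m \<beta> = Max (\<beta> ` {..<m}) - Min (\<beta> ` {..<m})"

text \<open>gamma = min over l, i ~= j of E[X_li (1 - X_lj)] = q_li (1 - q_lj) (independence).\<close>
definition gamma_min :: "nat \<Rightarrow> nat \<Rightarrow> (nat \<Rightarrow> real) \<Rightarrow> (nat \<Rightarrow> real) \<Rightarrow> real" where
  "gamma_min n m \<theta> \<beta> = Min {resp_prob \<theta> \<beta> l i * (1 - resp_prob \<theta> \<beta> l j) | l i j.
      l < n \<and> i < m \<and> j < m \<and> i \<noteq> j}"

definition complete_diag :: "nat \<Rightarrow> (nat \<Rightarrow> nat \<Rightarrow> real) \<Rightarrow> nat \<Rightarrow> nat \<Rightarrow> real" where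
  "complete_diag m Q i j = (if i = j then 1 - (\<Sum>k\<in>{..<m} - {i}. Q i k) else Q i j)"

definition P_emp :: "nat \<Rightarrow> nat \<Rightarrow> real \<Rightarrow> (nat \<Rightarrow> nat \<Rightarrow> bool) \<Rightarrow> (nat \<times> nat \<Rightarrow> bool)
    \<Rightarrow> nat \<Rightarrow> nat \<Rightarrow> real" where
  "P_emp n m p A X = complete_diag m (\<lambda>i j. (1 / (3/2 * real m * real n * p^2)) *
      (\<Sum>l<n. of_bool (A l i) * of_bool (A l j) * of_bool (X (l, i)) * (1 - of_bool (X (l, j)))))"

definition P_star :: "nat \<Rightarrow> nat \<Rightarrow> real \<Rightarrow> (nat \<Rightarrow> nat \<Rightarrow> bool) \<Rightarrow> (nat \<Rightarrow> real) \<Rightarrow> (nat \<Rightarrow> real)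
    \<Rightarrow> nat \<Rightarrow> nat \<Rightarrow> real" where
  "P_star n m p A \<theta> \<beta> = complete_diag m (\<lambda>i j. (1 / (3/2 * real m * real n * p^2)) *
      (\<Sum>l<n. of_bool (A l i) * of_bool (A l j) * (resp_prob \<theta> \<beta> l i * (1 - resp_prob \<theta> \<beta> l j))))"

definition response_pmf :: "nat \<Rightarrow> nat \<Rightarrow> (nat \<Rightarrow> real) \<Rightarrow> (nat \<Rightarrow> real) \<Rightarrow> (nat \<times> nat \<Rightarrow> bool) pmf" where
  "response_pmf n m \<theta> \<beta> = Pi_pmf ({..<n} \<times> {..<m}) False (\<lambda>(l, i). bernoulli_pmf (resp_prob \<theta> \<beta> l i))"

text \<open>Eigenvalues (with multiplicity, real roots of the characteristic polynomial) in
  non-increasing order: lambda_1 >= ... >= lambda_m. For a reversible stochastic matrix all m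
  eigenvalues are real.\<close>
definition eigs_desc :: "nat \<Rightarrow> (nat \<Rightarrow> nat \<Rightarrow> real) \<Rightarrow> real list" where
  "eigs_desc m M = rev (sorted_list_of_multiset (proots (char_poly (mat m m (\<lambda>(i, j). M i j)))))"

definition spectral_gap :: "nat \<Rightarrow> (nat \<Rightarrow> nat \<Rightarrow> real) \<Rightarrow> real" where
  "spectral_gap m M = 1 - max \<bar>eigs_desc m M ! 1\<bar> \<bar>eigs_desc m M ! (m - 1)\<bar>"

definition spec_norm :: "nat \<Rightarrow> (nat \<Rightarrow> nat \<Rightarrow> real) \<Rightarrow> real" where
  "spec_norm m M = Sup {sqrt (\<Sum>i<m. (\<Sum>j<m. M i j * x j)^2) | x :: nat \<Rightarrow> real. (\<Sum>j<m. (x j)^2) \<le> 1}"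

end

theory Submission
  imports Defs "HOL-Probability.Hoeffding"
begin

text \<open>P* is stochastic, reversible with respect to \<pi>* \<propto> exp \<beta>, and minorized:
  P*_ij \<ge> \<gamma> / (3 e^\<kappa>) \<pi>*_j. Splitting off the eigenvalue 1 by a similarity, every other
  eigenvector becomes orthogonal to \<pi>* in the weighted sense, and the minorization then bounds its
  eigenvalue by 1 - \<gamma> / (3 e^\<kappa>) in modulus; reversibility makes it real.
  Off the diagonal, d (P - P*)_ij with d = 3/2 m n p^2 is a centred sum of at most 3/2 n p^2
  independent [0,1]-valued terms, so Hoeffding's inequality and a union bound over the m^2 pairs
  keep all these entries below t = \<gamma> / (12 m e^(2\<kappa>)). As P - P* has zero row sums, Schur's test
  bounds its spectral norm by 2 m t = \<gamma> / (6 e^(2\<kappa>)), half the spectral gap bound.\<close>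

lemma reversible_eigenvalue_real:
  fixes P :: "nat \<Rightarrow> nat \<Rightarrow> real" and w :: "nat \<Rightarrow> real" and v :: "nat \<Rightarrow> complex"
  assumes w_pos: "\<And>i. i < m \<Longrightarrow> 0 < w i"
    and reversible: "\<And>i j. i < m \<Longrightarrow> j < m \<Longrightarrow> w i * P i j = w j * P j i"
    and eigen: "\<And>i. i < m \<Longrightarrow> (\<Sum>j<m. of_real (P i j) * v j) = \<mu> * v i"
    and nonzero: "k < m" "v k \<noteq> 0"
  shows "Im \<mu> = 0"
proof -
  define T where "T = (\<Sum>i<m. \<Sum>j<m. of_real (w i * P i j) * (cnj (v i) * v j))"
  define Q where "Q = (\<Sum>i<m. w i * (cmod (v i))\<^sup>2)"
  have "0 < w k * (cmod (v k))\<^sup>2" using nonzero w_pos by simp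
  also have "\<dots> \<le> Q" unfolding Q_def
    by (rule member_le_sum) (use nonzero w_pos in \<open>auto intro!: mult_nonneg_nonneg less_imp_le[OF w_pos]\<close>)
  finally have Q_pos: "0 < Q" .
  have cnj_mult_self: "complex_of_real ((cmod z)\<^sup>2) = cnj z * z" for z
    by (subst complex_norm_square) (simp add: mult.commute)
  have "\<mu> * of_real Q = (\<Sum>i<m. of_real (w i) * cnj (v i) * (\<mu> * v i))"
    unfolding Q_def of_real_sum of_real_mult cnj_mult_self sum_distrib_left
    by (intro sum.cong refl) (simp add: mult_ac)
  also have "\<dots> = (\<Sum>i<m. of_real (w i) * cnj (v i) * (\<Sum>j<m. of_real (P i j) * v j))"
    by (intro sum.cong refl) (simp add: eigen)
  also have "\<dots> = T" unfolding T_def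
    by (intro sum.cong refl) (simp add: sum_distrib_left mult_ac)
  finally have \<mu>Q: "\<mu> * of_real Q = T" .
  have "cnj T = (\<Sum>i<m. \<Sum>j<m. of_real (w j * P j i) * (v i * cnj (v j)))"
    unfolding T_def by (simp add: reversible mult_ac)
  also have "\<dots> = T" unfolding T_def
    by (subst sum.swap) (simp add: mult_ac)
  finally have "Im T = 0" by (metis cnj.sel(2) neg_equal_zero)
  then have "Im (\<mu> * of_real Q) = 0" using \<mu>Q by simp
  then show ?thesis using Q_pos by simp
qed

text \<open>With W the total weight, the minorization makes the matrix P i j - \<alpha> w j / W
  nonnegative with row sums 1 - \<alpha>, and the subtracted rank-one part annihilates eigenvectors
  orthogonal to w.\<close>
lemma minorized_eigenvalue_bound:
  fixes P :: "nat \<Rightarrow> nat \<Rightarrow> real" and w :: "nat \<Rightarrow> real" and v :: "nat \<Rightarrow> complex"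
  assumes w_pos: "\<And>i. i < m \<Longrightarrow> 0 < w i"
    and stochastic: "\<And>i. i < m \<Longrightarrow> (\<Sum>j<m. P i j) = 1"
    and minorized: "\<And>i j. i < m \<Longrightarrow> j < m \<Longrightarrow> \<alpha> * w j \<le> P i j * (\<Sum>k<m. w k)"
    and eigen: "\<And>i. i < m \<Longrightarrow> (\<Sum>j<m. of_real (P i j) * v j) = \<mu> * v i"
    and orthogonal: "(\<Sum>j<m. of_real (w j) * v j) = 0"
    and nonzero: "k0 < m" "v k0 \<noteq> 0"
  shows "cmod \<mu> \<le> 1 - \<alpha>"
proof -
  define W where "W = (\<Sum>k<m. w k)"
  have W_pos: "0 < W" unfolding W_def using nonzero w_pos by (intro sum_pos) auto
  obtain k where k: "k < m" "\<And>j. j < m \<Longrightarrow> cmod (v j) \<le> cmod (v k)"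
  proof -
    have "finite ((\<lambda>j. cmod (v j)) ` {..<m})" "(\<lambda>j. cmod (v j)) ` {..<m} \<noteq> {}"
      using nonzero by auto
    from Max_in[OF this] Max_ge[OF this(1)] show thesis using that by fastforce
  qed
  have vk_pos: "0 < cmod (v k)" using k(2)[OF nonzero(1)] nonzero by auto
  define c where "c j = P k j - \<alpha> * w j / W" for j
  have c_nonneg: "0 \<le> c j" if "j < m" for j
    using minorized[OF k(1) that] W_pos unfolding c_def W_def by (simp add: field_simps mult.commute)
  have c_sum: "(\<Sum>j<m. c j) = 1 - \<alpha>"
    using stochastic[OF k(1)] W_pos
    by (simp add: c_def sum_subtractf W_def flip: sum_divide_distrib sum_distrib_left)
  have "\<mu> * v k = (\<Sum>j<m. of_real (c j) * v j) + of_real (\<alpha> / W) * (\<Sum>j<m. of_real (w j) * v j)"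
    unfolding eigen[OF k(1), symmetric] c_def
    by (simp add: sum_distrib_left algebra_simps sum.distrib[symmetric] sum_subtractf[symmetric])
  then have "cmod \<mu> * cmod (v k) = cmod (\<Sum>j<m. of_real (c j) * v j)"
    by (simp add: orthogonal norm_mult[symmetric])
  also have "\<dots> \<le> (\<Sum>j<m. c j * cmod (v k))"
    by (rule order.trans[OF norm_sum sum_mono]) (simp add: norm_mult c_nonneg k(2) mult_left_mono)
  also have "\<dots> = (1 - \<alpha>) * cmod (v k)" by (simp add: c_sum flip: sum_distrib_right)
  finally show ?thesis using vk_pos by simp
qed

lemma reversible_left_eigenvector_div:
  fixes P :: "nat \<Rightarrow> nat \<Rightarrow> real" and w :: "nat \<Rightarrow> real" and u :: "nat \<Rightarrow> complex"
  assumes w_pos: "\<And>i. i < N \<Longrightarrow> 0 < w i"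
    and reversible: "\<And>i j. i < N \<Longrightarrow> j < N \<Longrightarrow> w i * P i j = w j * P j i"
    and left_eigen: "\<And>j. j < N \<Longrightarrow> (\<Sum>k<N. u k * of_real (P k j)) = \<mu> * u j"
    and "i < N"
  shows "(\<Sum>j<N. of_real (P i j) * (u j / of_real (w j))) = \<mu> * (u i / of_real (w i))"
proof -
  have "of_real (P i j) * (u j / of_real (w j)) = u j * of_real (P j i) / of_real (w i)"
    if "j < N" for j
  proof -
    have "P i j / w j = P j i / w i"
      using reversible[OF \<open>i < N\<close> that] w_pos[OF \<open>i < N\<close>] w_pos[OF that] by (simp add: field_simps)
    then have "complex_of_real (P i j) / of_real (w j) = of_real (P j i) / of_real (w i)"
      by (metis of_real_divide)
    then show ?thesis by (metis times_divide_eq_left times_divide_eq_right mult.commute)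
  qed
  then have "(\<Sum>j<N. of_real (P i j) * (u j / of_real (w j)))
      = (\<Sum>j<N. u j * of_real (P j i)) / of_real (w i)"
    by (simp add: sum_divide_distrib)
  also have "\<dots> = \<mu> * (u i / of_real (w i))" using left_eigen[OF \<open>i < N\<close>] by simp
  finally show ?thesis .
qed

text \<open>The inverse of deflation: a left eigenvector of the deflated matrix becomes one of P, with
  entries summing to zero, once the entry -\<Sum>y is prepended.\<close>
lemma left_eigenvector_undeflate:
  fixes P :: "nat \<Rightarrow> nat \<Rightarrow> real" and y :: "nat \<Rightarrow> complex"
  assumes stochastic: "\<And>i. i < Suc n \<Longrightarrow> (\<Sum>j<Suc n. P i j) = 1"
    and left_eigen: "\<And>j. j < n \<Longrightarrow>
      (\<Sum>i<n. y i * of_real (P (Suc i) (Suc j) - P 0 (Suc j))) = \<mu> * y j"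
    and "j < Suc n"
  defines "u \<equiv> \<lambda>k. if k = 0 then - (\<Sum>i<n. y i) else y (k - 1)"
  shows "(\<Sum>k<Suc n. u k * of_real (P k j)) = \<mu> * u j"
proof -
  have u_sum: "(\<Sum>k<Suc n. u k) = 0"
    unfolding sum.lessThan_Suc_shift by (simp add: u_def)
  have left_Suc: "(\<Sum>k<Suc n. u k * of_real (P k (Suc j))) = \<mu> * u (Suc j)" if "j < n" for j
  proof -
    have "(\<Sum>k<Suc n. u k * of_real (P k (Suc j)))
        = (\<Sum>i<n. y i * of_real (P (Suc i) (Suc j) - P 0 (Suc j)))"
      unfolding sum.lessThan_Suc_shift
      by (simp add: u_def sum_distrib_right algebra_simps sum_subtractf)
    also have "\<dots> = \<mu> * u (Suc j)" using left_eigen[OF that] by (simp add: u_def)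
    finally show ?thesis .
  qed
  have P_0: "P k 0 = 1 - (\<Sum>j<n. P k (Suc j))" if "k < Suc n" for k
    using stochastic[OF that] unfolding sum.lessThan_Suc_shift by simp
  have "(\<Sum>k<Suc n. u k * of_real (P k 0))
      = (\<Sum>k<Suc n. u k) - (\<Sum>k<Suc n. \<Sum>j<n. u k * of_real (P k (Suc j)))"
    by (simp add: P_0 of_real_sum sum_distrib_left right_diff_distrib sum_subtractf)
  also have "\<dots> = - (\<Sum>j<n. \<mu> * u (Suc j))"
    by (subst sum.swap) (simp add: u_sum left_Suc del: sum.lessThan_Suc)
  also have "\<dots> = \<mu> * u 0" by (simp add: u_def sum_distrib_left)
  finally show ?thesis using \<open>j < Suc n\<close> left_Suc by (cases j) auto
qed

lemma deflated_left_eigenvalue_bound: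
  fixes P :: "nat \<Rightarrow> nat \<Rightarrow> real" and w :: "nat \<Rightarrow> real" and y :: "nat \<Rightarrow> complex"
  assumes w_pos: "\<And>i. i < Suc n \<Longrightarrow> 0 < w i"
    and stochastic: "\<And>i. i < Suc n \<Longrightarrow> (\<Sum>j<Suc n. P i j) = 1"
    and reversible: "\<And>i j. i < Suc n \<Longrightarrow> j < Suc n \<Longrightarrow> w i * P i j = w j * P j i"
    and minorized: "\<And>i j. i < Suc n \<Longrightarrow> j < Suc n \<Longrightarrow> \<alpha> * w j \<le> P i j * (\<Sum>k<Suc n. w k)"
    and left_eigen: "\<And>j. j < n \<Longrightarrow>
      (\<Sum>i<n. y i * of_real (P (Suc i) (Suc j) - P 0 (Suc j))) = \<mu> * y j"
    and nonzero: "k < n" "y k \<noteq> 0"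
  shows "Im \<mu> = 0 \<and> cmod \<mu> \<le> 1 - \<alpha>"
proof -
  define u where "u = (\<lambda>k. if k = 0 then - (\<Sum>i<n. y i) else y (k - 1))"
  define v where "v k = u k / of_real (w k)" for k
  have left: "(\<Sum>k<Suc n. u k * of_real (P k j)) = \<mu> * u j" if "j < Suc n" for j
    unfolding u_def by (rule left_eigenvector_undeflate[OF stochastic left_eigen that])
  have right: "(\<Sum>j<Suc n. of_real (P i j) * v j) = \<mu> * v i" if "i < Suc n" for i
    unfolding v_def by (rule reversible_left_eigenvector_div[OF w_pos reversible left that])
  have "(\<Sum>j<Suc n. of_real (w j) * v j) = (\<Sum>j<Suc n. u j)"
    by (intro sum.cong refl) (use w_pos in \<open>fastforce simp: v_def\<close>)
  then have orthogonal: "(\<Sum>j<Suc n. of_real (w j) * v j) = 0"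
    unfolding sum.lessThan_Suc_shift by (simp add: u_def)
  have v_nonzero: "v (Suc k) \<noteq> 0" using nonzero w_pos[of "Suc k"] by (simp add: v_def u_def)
  show ?thesis
    using reversible_eigenvalue_real[OF w_pos reversible right _ v_nonzero]
      minorized_eigenvalue_bound[OF w_pos stochastic minorized right orthogonal _ v_nonzero]
      nonzero by simp
qed

definition first_col_shear :: "nat \<Rightarrow> 'a::comm_ring_1 mat" where
  "first_col_shear N = mat N N (\<lambda>(i, j). if j = 0 then 1 else of_bool (i = j))"

definition first_col_unshear :: "nat \<Rightarrow> 'a::comm_ring_1 mat" where
  "first_col_unshear N = mat N N (\<lambda>(i, j). if j = 0 \<and> i \<noteq> 0 then -1 else of_bool (i = j))"

definition deflated_mat :: "nat \<Rightarrow> (nat \<Rightarrow> nat \<Rightarrow> 'a::ab_group_add) \<Rightarrow> 'a mat" where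
  "deflated_mat n P = mat n n (\<lambda>(i, j). P (Suc i) (Suc j) - P 0 (Suc j))"

lemma first_col_shear_carrier [simp]:
  "first_col_shear N \<in> carrier_mat N N" "first_col_unshear N \<in> carrier_mat N N"
  by (simp_all add: first_col_shear_def first_col_unshear_def)

lemma sum_first_col_shear_row:
  fixes g :: "nat \<Rightarrow> 'a::comm_ring_1"
  assumes "i < N"
  shows "(\<Sum>k = 0..<N. (if k = 0 then 1 else of_bool (i = k)) * g k) = g 0 + (if i \<noteq> 0 then g i else 0)"
proof -
  have "0 \<in> {0..<N}" using assms by simp
  then show ?thesis using assms
    by (simp add: sum.remove[of _ 0] if_distrib sum.If_cases sum.delta Diff_eq Int_def conj_commute Collect_conv_if)
qed

lemma sum_first_col_unshear_row:
  fixes g :: "nat \<Rightarrow> 'a::comm_ring_1"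
  assumes "i < N"
  shows "(\<Sum>k = 0..<N. (if k = 0 \<and> i \<noteq> 0 then -1 else of_bool (i = k)) * g k) = (if i = 0 then g 0 else g i - g 0)"
proof -
  have "0 \<in> {0..<N}" using assms by simp
  then show ?thesis using assms
    by (simp add: sum.remove[of _ 0] if_distrib sum.If_cases sum.delta Diff_eq Int_def conj_commute Collect_conv_if)
qed

lemma first_col_shear_unshear: "first_col_shear N * first_col_unshear N = 1\<^sub>m N"
proof (rule eq_matI)
  fix i j assume "i < dim_row (1\<^sub>m N :: 'a mat)" "j < dim_col (1\<^sub>m N :: 'a mat)"
  then have ij: "i < N" "j < N" by simp_all
  have "(first_col_shear N * first_col_unshear N :: 'a mat) $$ (i, j)
      = (\<Sum>k = 0..<N. (if k = 0 then 1 else of_bool (i = k)) * first_col_unshear N $$ (k, j))"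
    using ij by (simp add: first_col_shear_def first_col_unshear_def scalar_prod_def)
  also have "\<dots> = first_col_unshear N $$ (0, j) + (if i \<noteq> 0 then first_col_unshear N $$ (i, j) else 0)"
    using ij(1) by (rule sum_first_col_shear_row)
  also have "\<dots> = 1\<^sub>m N $$ (i, j)" using ij by (auto simp: first_col_unshear_def)
  finally show "(first_col_shear N * first_col_unshear N :: 'a mat) $$ (i, j) = 1\<^sub>m N $$ (i, j)" .
qed (simp_all add: first_col_shear_def first_col_unshear_def)

lemma first_col_unshear_shear: "first_col_unshear N * first_col_shear N = 1\<^sub>m N"
proof (rule eq_matI)
  fix i j assume "i < dim_row (1\<^sub>m N :: 'a mat)" "j < dim_col (1\<^sub>m N :: 'a mat)"
  then have ij: "i < N" "j < N" by simp_all
  have "(first_col_unshear N * first_col_shear N :: 'a mat) $$ (i, j)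
      = (\<Sum>k = 0..<N. (if k = 0 \<and> i \<noteq> 0 then -1 else of_bool (i = k)) * first_col_shear N $$ (k, j))"
    using ij by (simp add: first_col_shear_def first_col_unshear_def scalar_prod_def)
  also have "\<dots> = (if i = 0 then first_col_shear N $$ (0, j)
      else first_col_shear N $$ (i, j) - first_col_shear N $$ (0, j))"
    using ij(1) by (rule sum_first_col_unshear_row)
  also have "\<dots> = 1\<^sub>m N $$ (i, j)" using ij by (auto simp: first_col_shear_def)
  finally show "(first_col_unshear N * first_col_shear N :: 'a mat) $$ (i, j) = 1\<^sub>m N $$ (i, j)" .
qed (simp_all add: first_col_shear_def first_col_unshear_def)

text \<open>Since P has row sums 1, the first column of P times the shear is the all-ones vector, which
  the inverse shear maps to the first unit vector.\<close>
lemma first_col_shear_conj_stochastic: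
  fixes P :: "nat \<Rightarrow> nat \<Rightarrow> 'a::comm_ring_1"
  assumes stochastic: "\<And>i. i < Suc n \<Longrightarrow> (\<Sum>j<Suc n. P i j) = 1"
  shows "first_col_unshear (Suc n) * (mat (Suc n) (Suc n) (\<lambda>(i, j). P i j) * first_col_shear (Suc n))
    = four_block_mat (mat 1 1 (\<lambda>_. 1)) (mat 1 n (\<lambda>(_, j). P 0 (Suc j))) (0\<^sub>m n 1) (deflated_mat n P)"
    (is "_ * ?PS = ?B")
proof (rule eq_matI)
  fix i j assume "i < dim_row ?B" "j < dim_col ?B"
  then have ij: "i < Suc n" "j < Suc n" by (auto simp: deflated_mat_def)
  have PS: "?PS $$ (k, j) = (if j = 0 then 1 else P k j)" if "k < Suc n" for k
  proof -
    have "?PS $$ (k, j) = (\<Sum>l = 0..<Suc n. P k l * (if j = 0 then 1 else of_bool (l = j)))"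
      using that ij by (simp add: first_col_shear_def scalar_prod_def)
    also have "\<dots> = (if j = 0 then 1 else P k j)"
      using stochastic[OF that] ij by (auto simp: atLeast0LessThan if_distrib sum.delta cong: if_cong)
    finally show ?thesis .
  qed
  have PS_carrier: "?PS \<in> carrier_mat (Suc n) (Suc n)"
    by (rule mult_carrier_mat[of _ _ "Suc n"]) simp_all
  have "(first_col_unshear (Suc n) * ?PS) $$ (i, j)
      = (\<Sum>k = 0..<Suc n. (if k = 0 \<and> i \<noteq> 0 then -1 else of_bool (i = k)) * ?PS $$ (k, j))"
    using ij carrier_matD[OF PS_carrier]
    by (simp add: first_col_unshear_def scalar_prod_def del: sum.op_ivl_Suc)
  also have "\<dots> = (if i = 0 then ?PS $$ (0, j) else ?PS $$ (i, j) - ?PS $$ (0, j))"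
    using ij(1) by (rule sum_first_col_unshear_row)
  also have "\<dots> = ?B $$ (i, j)"
    using ij by (auto simp: PS deflated_mat_def)
  finally show "(first_col_unshear (Suc n) * ?PS) $$ (i, j) = ?B $$ (i, j)" .
qed (auto simp: first_col_unshear_def first_col_shear_def deflated_mat_def)

lemma char_poly_deflate:
  fixes P :: "nat \<Rightarrow> nat \<Rightarrow> 'a::comm_ring_1"
  assumes stochastic: "\<And>i. i < Suc n \<Longrightarrow> (\<Sum>j<Suc n. P i j) = 1"
  shows "char_poly (mat (Suc n) (Suc n) (\<lambda>(i, j). P i j)) = [:-1, 1:] * char_poly (deflated_mat n P)"
proof -
  define M where "M = mat (Suc n) (Suc n) (\<lambda>(i, j). P i j)"
  define S :: "'a mat" where "S = first_col_shear (Suc n)"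
  define S' :: "'a mat" where "S' = first_col_unshear (Suc n)"
  have carrier: "M \<in> carrier_mat (Suc n) (Suc n)" "S \<in> carrier_mat (Suc n) (Suc n)"
    "S' \<in> carrier_mat (Suc n) (Suc n)"
    by (simp_all add: M_def S_def S'_def)
  have SS': "S * S' = 1\<^sub>m (Suc n)" "S' * S = 1\<^sub>m (Suc n)"
    unfolding S_def S'_def by (rule first_col_shear_unshear first_col_unshear_shear)+
  have MS: "M * S \<in> carrier_mat (Suc n) (Suc n)" using carrier by simp
  have "S * (S' * (M * S)) * S' = (S * S') * (M * S) * S'"
    by (simp add: assoc_mult_mat[OF carrier(2,3) MS])
  also have "\<dots> = M * (S * S')" using carrier MS by (simp add: SS' assoc_mult_mat)
  also have "\<dots> = M" using carrier by (simp add: SS')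
  finally have "similar_mat M (S' * (M * S))"
    using carrier SS' by (intro similar_matI[where P=S and Q=S']) auto
  then have "char_poly M = char_poly (S' * (M * S))" by (rule char_poly_similar)
  also have "S' * (M * S) = four_block_mat (mat 1 1 (\<lambda>_. 1)) (mat 1 n (\<lambda>(_, j). P 0 (Suc j)))
      (0\<^sub>m n 1) (deflated_mat n P)"
    unfolding M_def S_def S'_def by (rule first_col_shear_conj_stochastic[OF stochastic])
  also have "char_poly \<dots> = char_poly (mat 1 1 (\<lambda>_. 1)) * char_poly (deflated_mat n P)"
    by (rule char_poly_four_block_zeros_col) (auto simp: deflated_mat_def)
  also have "char_poly (mat 1 1 (\<lambda>_. 1) :: 'a mat) = [:-1, 1:]"
    by (subst char_poly_upper_triangular[of _ 1]) (auto simp: upper_triangular_def diag_mat_def)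
  finally show ?thesis unfolding M_def .
qed

lemma deflated_char_poly_root_bound:
  fixes P :: "nat \<Rightarrow> nat \<Rightarrow> real" and w :: "nat \<Rightarrow> real"
  assumes w_pos: "\<And>i. i < Suc n \<Longrightarrow> 0 < w i"
    and stochastic: "\<And>i. i < Suc n \<Longrightarrow> (\<Sum>j<Suc n. P i j) = 1"
    and reversible: "\<And>i j. i < Suc n \<Longrightarrow> j < Suc n \<Longrightarrow> w i * P i j = w j * P j i"
    and minorized: "\<And>i j. i < Suc n \<Longrightarrow> j < Suc n \<Longrightarrow> \<alpha> * w j \<le> P i j * (\<Sum>k<Suc n. w k)"
    and root: "poly (char_poly (map_mat complex_of_real (deflated_mat n P))) a = 0"
  shows "Im a = 0 \<and> cmod a \<le> 1 - \<alpha>"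
proof -
  define B where "B = map_mat complex_of_real (deflated_mat n P)"
  have B_carrier: "B \<in> carrier_mat n n" by (simp add: B_def deflated_mat_def)
  have "eigenvalue (transpose_mat B) a"
    using root B_carrier eigenvalue_root_char_poly[of "transpose_mat B" n] by (simp add: B_def)
  then obtain v where v: "v \<in> carrier_vec n" "v \<noteq> 0\<^sub>v n" "transpose_mat B *\<^sub>v v = a \<cdot>\<^sub>v v"
    unfolding eigenvalue_def eigenvector_def using B_carrier by auto
  obtain k where k: "k < n" "v $ k \<noteq> 0"
    using v(1,2) by (metis eq_vecI carrier_vecD index_zero_vec(1,2))
  have left_eigen: "(\<Sum>i<n. v $ i * of_real (P (Suc i) (Suc j) - P 0 (Suc j))) = a * v $ j"
    if j: "j < n" for j
  proof -
    have "(\<Sum>i<n. v $ i * of_real (P (Suc i) (Suc j) - P 0 (Suc j))) = (transpose_mat B *\<^sub>v v) $ j"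
      using j B_carrier v(1)
      by (auto simp: B_def deflated_mat_def scalar_prod_def atLeast0LessThan mult.commute intro!: sum.cong)
    also have "\<dots> = a * v $ j" using v(1,3) j by simp
    finally show ?thesis .
  qed
  show ?thesis
    by (rule deflated_left_eigenvalue_bound[OF w_pos stochastic reversible minorized left_eigen k])
qed

lemma proots_prod_linear: "proots (\<Prod>r\<leftarrow>rs. [:-r, 1:]) = mset (rs :: real list)"
proof (induction rs)
  case (Cons r rs)
  have "(\<Prod>r\<leftarrow>rs. [:-r, 1:]) \<noteq> 0" by (auto simp: prod_list_zero_iff)
  then have "proots ([:-r, 1:] * (\<Prod>r\<leftarrow>rs. [:-r, 1:])) = proots [:-r, 1:] + proots (\<Prod>r\<leftarrow>rs. [:-r, 1:])"
    by (intro proots_mult) auto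
  then show ?case using Cons by simp
qed simp

lemma poly_prod_linear_of_real:
  "poly (\<Prod>a\<leftarrow>map complex_of_real rs. [:-a, 1:]) (of_real x) = of_real (poly (\<Prod>r\<leftarrow>rs. [:-r, 1:]) x)"
  by (induction rs) simp_all

lemma char_poly_real_roots_factor:
  fixes B :: "real mat"
  assumes B_carrier: "B \<in> carrier_mat n n"
    and real_roots: "\<And>a. poly (char_poly (map_mat complex_of_real B)) a = 0 \<Longrightarrow> Im a = 0"
  obtains rs where "char_poly B = (\<Prod>r\<leftarrow>rs. [:-r, 1:])" "length rs = n"
    "\<And>r. r \<in> set rs \<Longrightarrow> poly (char_poly (map_mat complex_of_real B)) (of_real r) = 0"
proof -
  define Bc where "Bc = map_mat complex_of_real B"
  have Bc_carrier: "Bc \<in> carrier_mat n n" using B_carrier by (simp add: Bc_def)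
  obtain as where as: "char_poly Bc = (\<Prod>a\<leftarrow>as. [:- a, 1:])" "length as = n"
    using char_poly_factorized[OF Bc_carrier] by blast
  have as_roots: "poly (char_poly Bc) a = 0" if "a \<in> set as" for a
    unfolding as(1) by (rule linear_poly_root[OF that])
  define rs where "rs = map Re as"
  have as_rs: "as = map complex_of_real rs"
    unfolding rs_def
    by (rule nth_equalityI) (use as_roots real_roots in \<open>auto simp: Bc_def complex_eq_iff\<close>)
  have "poly (char_poly B) x = poly (\<Prod>r\<leftarrow>rs. [:-r, 1:]) x" for x
  proof -
    have "complex_of_real (poly (char_poly B) x) = poly (char_poly Bc) (of_real x)"
      by (simp add: Bc_def of_real_hom.char_poly_hom[OF B_carrier] of_real_hom.poly_map_poly)
    also have "\<dots> = of_real (poly (\<Prod>r\<leftarrow>rs. [:-r, 1:]) x)"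
      unfolding as(1) as_rs by (rule poly_prod_linear_of_real)
    finally show ?thesis by simp
  qed
  then have "char_poly B = (\<Prod>r\<leftarrow>rs. [:-r, 1:])" by (intro poly_eq_poly_eq_iff[THEN iffD1]) auto
  moreover have "length rs = n" using as(2) by (simp add: rs_def)
  moreover have "poly (char_poly Bc) (of_real r) = 0" if "r \<in> set rs" for r
    using that as_roots unfolding as_rs by auto
  ultimately show thesis using that unfolding Bc_def by blast
qed

lemma spectral_gap_ge_of_char_poly:
  fixes P :: "nat \<Rightarrow> nat \<Rightarrow> real"
  assumes "1 \<le> n" and "0 < \<alpha>"
    and char_poly_eq: "char_poly (mat (Suc n) (Suc n) (\<lambda>(i, j). P i j)) = [:-1, 1:] * (\<Prod>r\<leftarrow>rs. [:-r, 1:])"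
    and length_rs: "length rs = n"
    and rs_bound: "\<And>r. r \<in> set rs \<Longrightarrow> \<bar>r\<bar> \<le> 1 - \<alpha>"
  shows "\<alpha> \<le> spectral_gap (Suc n) P"
proof -
  have "(\<Prod>r\<leftarrow>rs. [:-r, 1:]) \<noteq> 0" by (auto simp: prod_list_zero_iff)
  then have "proots ([:-1, 1:] * (\<Prod>r\<leftarrow>rs. [:-r, 1:])) = proots [:-1, 1:] + proots (\<Prod>r\<leftarrow>rs. [:-r, 1:])"
    by (intro proots_mult) auto
  then have "proots (char_poly (mat (Suc n) (Suc n) (\<lambda>(i, j). P i j))) = mset (1 # rs)"
    by (simp add: char_poly_eq proots_prod_linear)
  moreover have "sort (1 # rs) = sort rs @ [1]"
    using rs_bound \<open>0 < \<alpha>\<close> by (force intro: sorted_insort_is_snoc)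
  ultimately have eigs: "eigs_desc (Suc n) P = 1 # rev (sort rs)"
    unfolding eigs_desc_def by (simp add: sorted_list_of_multiset_mset)
  have "eigs_desc (Suc n) P ! 1 \<in> set rs" "eigs_desc (Suc n) P ! (Suc n - 1) \<in> set rs"
    using assms(1) length_rs unfolding eigs
    by (auto simp: nth_Cons' rev_nth intro!: nth_mem[of _ "sort rs", simplified])
  from this[THEN rs_bound] show ?thesis unfolding spectral_gap_def by simp
qed

lemma spectral_gap_ge_minorization:
  fixes P :: "nat \<Rightarrow> nat \<Rightarrow> real" and w :: "nat \<Rightarrow> real"
  assumes "2 \<le> m" and "0 < \<alpha>"
    and w_pos: "\<And>i. i < m \<Longrightarrow> 0 < w i"
    and stochastic: "\<And>i. i < m \<Longrightarrow> (\<Sum>j<m. P i j) = 1"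
    and reversible: "\<And>i j. i < m \<Longrightarrow> j < m \<Longrightarrow> w i * P i j = w j * P j i"
    and minorized: "\<And>i j. i < m \<Longrightarrow> j < m \<Longrightarrow> \<alpha> * w j \<le> P i j * (\<Sum>k<m. w k)"
  shows "\<alpha> \<le> spectral_gap m P"
proof -
  obtain n where m: "m = Suc n" and "1 \<le> n" using \<open>2 \<le> m\<close> by (cases m) auto
  note hyps = w_pos stochastic reversible minorized
  have root_bound: "Im a = 0 \<and> cmod a \<le> 1 - \<alpha>"
    if "poly (char_poly (map_mat complex_of_real (deflated_mat n P))) a = 0" for a
    by (rule deflated_char_poly_root_bound[OF hyps[unfolded m] that])
  obtain rs where rs: "char_poly (deflated_mat n P) = (\<Prod>r\<leftarrow>rs. [:-r, 1:])" "length rs = n"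
    "\<And>r. r \<in> set rs \<Longrightarrow> poly (char_poly (map_mat complex_of_real (deflated_mat n P))) (of_real r) = 0"
    using char_poly_real_roots_factor[of "deflated_mat n P" n] root_bound
    by (auto simp: deflated_mat_def)
  have "\<bar>r\<bar> \<le> 1 - \<alpha>" if "r \<in> set rs" for r
    using root_bound[OF rs(3)[OF that]] by simp
  moreover have "char_poly (mat (Suc n) (Suc n) (\<lambda>(i, j). P i j)) = [:-1, 1:] * (\<Prod>r\<leftarrow>rs. [:-r, 1:])"
    using char_poly_deflate[OF stochastic[unfolded m]] rs(1) by simp
  ultimately show ?thesis
    unfolding m using spectral_gap_ge_of_char_poly[OF \<open>1 \<le> n\<close> \<open>0 < \<alpha>\<close> _ rs(2)] by blast
qed

lemma weighted_Cauchy_Schwarz: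
  fixes a y :: "'a \<Rightarrow> real"
  assumes "\<And>j. j \<in> A \<Longrightarrow> 0 \<le> a j"
  shows "(\<Sum>j\<in>A. a j * y j)\<^sup>2 \<le> (\<Sum>j\<in>A. a j) * (\<Sum>j\<in>A. a j * (y j)\<^sup>2)"
proof -
  have "(\<Sum>j\<in>A. a j * y j)\<^sup>2 = (\<Sum>j\<in>A. sqrt (a j) * (sqrt (a j) * y j))\<^sup>2"
    using assms by (simp add: mult.assoc[symmetric])
  also have "\<dots> \<le> (\<Sum>j\<in>A. (sqrt (a j))\<^sup>2) * (\<Sum>j\<in>A. (sqrt (a j) * y j)\<^sup>2)"
    by (rule Cauchy_Schwarz_ineq_sum)
  also have "\<dots> = (\<Sum>j\<in>A. a j) * (\<Sum>j\<in>A. a j * (y j)\<^sup>2)"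
    using assms by (simp add: power_mult_distrib)
  finally show ?thesis .
qed

lemma spec_norm_le_Schur:
  fixes D :: "nat \<Rightarrow> nat \<Rightarrow> real"
  assumes "0 \<le> R"
    and row_sums: "\<And>i. i < m \<Longrightarrow> (\<Sum>j<m. \<bar>D i j\<bar>) \<le> R"
    and col_sums: "\<And>j. j < m \<Longrightarrow> (\<Sum>i<m. \<bar>D i j\<bar>) \<le> R"
  shows "spec_norm m D \<le> R"
  unfolding spec_norm_def
proof (rule cSup_least)
  show "{sqrt (\<Sum>i<m. (\<Sum>j<m. D i j * x j)\<^sup>2) |x. (\<Sum>j<m. (x j)\<^sup>2) \<le> 1} \<noteq> {}"
    by (auto intro!: exI[of _ "\<lambda>_. 0"])
next
  fix s assume "s \<in> {sqrt (\<Sum>i<m. (\<Sum>j<m. D i j * x j)\<^sup>2) |x. (\<Sum>j<m. (x j)\<^sup>2) \<le> 1}"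
  then obtain x where s: "s = sqrt (\<Sum>i<m. (\<Sum>j<m. D i j * x j)\<^sup>2)"
    and x: "(\<Sum>j<m. (x j)\<^sup>2) \<le> 1" by blast
  have row: "(\<Sum>j<m. D i j * x j)\<^sup>2 \<le> R * (\<Sum>j<m. \<bar>D i j\<bar> * (x j)\<^sup>2)" if "i < m" for i
  proof -
    have "\<bar>\<Sum>j<m. D i j * x j\<bar> \<le> (\<Sum>j<m. \<bar>D i j\<bar> * \<bar>x j\<bar>)"
      by (rule order.trans[OF sum_abs]) (simp add: abs_mult)
    then have "(\<Sum>j<m. D i j * x j)\<^sup>2 \<le> (\<Sum>j<m. \<bar>D i j\<bar> * \<bar>x j\<bar>)\<^sup>2"
      by (metis abs_ge_zero order_trans power2_abs power_mono)
    also have "\<dots> \<le> (\<Sum>j<m. \<bar>D i j\<bar>) * (\<Sum>j<m. \<bar>D i j\<bar> * \<bar>x j\<bar>\<^sup>2)"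
      by (rule weighted_Cauchy_Schwarz) simp
    also have "\<dots> \<le> R * (\<Sum>j<m. \<bar>D i j\<bar> * (x j)\<^sup>2)"
      using row_sums[OF that] by (simp add: mult_right_mono sum_nonneg)
    finally show ?thesis .
  qed
  have "(\<Sum>i<m. (\<Sum>j<m. D i j * x j)\<^sup>2) \<le> (\<Sum>i<m. R * (\<Sum>j<m. \<bar>D i j\<bar> * (x j)\<^sup>2))"
    by (intro sum_mono row) simp
  also have "\<dots> = R * (\<Sum>j<m. (\<Sum>i<m. \<bar>D i j\<bar>) * (x j)\<^sup>2)"
  proof -
    have "(\<Sum>i<m. \<Sum>j<m. \<bar>D i j\<bar> * (x j)\<^sup>2) = (\<Sum>j<m. \<Sum>i<m. \<bar>D i j\<bar> * (x j)\<^sup>2)"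
      by (rule sum.swap)
    then show ?thesis by (simp add: sum_distrib_right flip: sum_distrib_left)
  qed
  also have "\<dots> \<le> R * (\<Sum>j<m. R * (x j)\<^sup>2)"
    by (intro mult_left_mono[OF _ \<open>0 \<le> R\<close>] sum_mono mult_right_mono col_sums) auto
  also have "\<dots> \<le> R\<^sup>2"
    using mult_left_mono[OF x, of "R * R"] \<open>0 \<le> R\<close>
    by (simp add: power2_eq_square sum_distrib_left mult.assoc)
  finally show "s \<le> R" unfolding s using \<open>0 \<le> R\<close> by (simp add: real_sqrt_le_iff real_le_lsqrt)
qed

lemma spec_norm_le_zero_row_sums:
  fixes D :: "nat \<Rightarrow> nat \<Rightarrow> real"
  assumes "1 \<le> m" and "0 \<le> t"
    and off_diag: "\<And>i j. i < m \<Longrightarrow> j < m \<Longrightarrow> i \<noteq> j \<Longrightarrow> \<bar>D i j\<bar> \<le> t"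
    and diag: "\<And>i. i < m \<Longrightarrow> D i i = - (\<Sum>k\<in>{..<m} - {i}. D i k)"
  shows "spec_norm m D \<le> 2 * (real m - 1) * t"
proof (rule spec_norm_le_Schur)
  have off_sum: "(\<Sum>k\<in>{..<m} - {i}. \<bar>f k\<bar>) \<le> (real m - 1) * t"
    if "i < m" "\<And>k. k < m \<Longrightarrow> k \<noteq> i \<Longrightarrow> \<bar>f k\<bar> \<le> t" for i and f :: "nat \<Rightarrow> real"
    using sum_mono[of "{..<m} - {i}" "\<lambda>k. \<bar>f k\<bar>" "\<lambda>_. t"] that
    by (simp add: card_Diff_singleton of_nat_diff)
  have diag_abs: "\<bar>D i i\<bar> \<le> (real m - 1) * t" if "i < m" for i
  proof -
    have "\<bar>D i i\<bar> \<le> (\<Sum>k\<in>{..<m} - {i}. \<bar>D i k\<bar>)"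
      unfolding diag[OF that] abs_minus_cancel by (rule sum_abs)
    also have "\<dots> \<le> (real m - 1) * t" by (rule off_sum[OF that]) (use off_diag[OF that] in auto)
    finally show ?thesis .
  qed
  show "(\<Sum>j<m. \<bar>D i j\<bar>) \<le> 2 * (real m - 1) * t" if "i < m" for i
  proof -
    have "(\<Sum>k\<in>{..<m} - {i}. \<bar>D i k\<bar>) \<le> (real m - 1) * t"
      by (rule off_sum[OF that]) (use off_diag[OF that] in auto)
    then show ?thesis
      using that diag_abs[OF that] by (subst sum.remove[of _ i]) (auto simp: algebra_simps)
  qed
  show "(\<Sum>i<m. \<bar>D i j\<bar>) \<le> 2 * (real m - 1) * t" if "j < m" for j
  proof -
    have "(\<Sum>k\<in>{..<m} - {j}. \<bar>D k j\<bar>) \<le> (real m - 1) * t"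
      by (rule off_sum[OF that]) (use off_diag[OF _ that] in auto)
    then show ?thesis
      using that diag_abs[OF that] by (subst sum.remove[of _ j]) (auto simp: algebra_simps)
  qed
  show "0 \<le> 2 * (real m - 1) * t" using assms(1,2) by simp
qed

lemma expectation_Pi_bernoulli_pair:
  fixes Q :: "nat \<Rightarrow> nat \<Rightarrow> real"
  assumes "l < n" "i < m" "j < m" "i \<noteq> j"
    and Q: "\<And>l i. 0 \<le> Q l i \<and> Q l i \<le> 1"
  shows "measure_pmf.expectation (Pi_pmf ({..<n} \<times> {..<m}) False (\<lambda>(l, i). bernoulli_pmf (Q l i)))
      (\<lambda>X. of_bool (X (l, i)) * (1 - of_bool (X (l, j)))) = Q l i * (1 - Q l j)"
proof -
  define I where "I = {..<n} \<times> {..<m}"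
  define F where "F x = (\<lambda>b. if x = (l, i) then of_bool b else if x = (l, j) then 1 - of_bool b else 1 :: real)"
    for x
  have fin: "finite I" unfolding I_def by simp
  have sub: "{(l, i), (l, j)} \<subseteq> I" unfolding I_def using assms by auto
  have "(\<Prod>x\<in>I. F x (X x)) = of_bool (X (l, i)) * (1 - of_bool (X (l, j)))" for X
    using \<open>i \<noteq> j\<close> by (subst prod.mono_neutral_right[OF fin sub]) (auto simp: F_def)
  then have "measure_pmf.expectation (Pi_pmf I False (\<lambda>(l, i). bernoulli_pmf (Q l i)))
      (\<lambda>X. of_bool (X (l, i)) * (1 - of_bool (X (l, j))))
      = (\<Prod>x\<in>I. measure_pmf.expectation ((\<lambda>(l, i). bernoulli_pmf (Q l i)) x) (F x))"
    by (subst expectation_prod_Pi_pmf[OF fin, symmetric])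
      (auto simp: F_def intro!: integrable_measure_pmf_finite)
  also have "\<dots> = Q l i * (1 - Q l j)"
    using \<open>i \<noteq> j\<close> Q[of l i] Q[of l j]
    by (subst prod.mono_neutral_right[OF fin sub]) (auto simp: F_def integral_bernoulli_pmf)
  finally show ?thesis unfolding I_def .
qed

lemma indep_vars_Pi_bernoulli_pair:
  fixes Q :: "nat \<Rightarrow> nat \<Rightarrow> real" and c :: "nat \<Rightarrow> real"
  assumes "i < m" "j < m"
  shows "prob_space.indep_vars (Pi_pmf ({..<n} \<times> {..<m}) False (\<lambda>(l, i). bernoulli_pmf (Q l i)))
    (\<lambda>_. borel) (\<lambda>l X. c l * (of_bool (X (l, i)) * (1 - of_bool (X (l, j))))) {..<n}"
proof -
  define M where "M = Pi_pmf ({..<n} \<times> {..<m}) False (\<lambda>(l, i). bernoulli_pmf (Q l i))"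
  define K where "K l = {(l, i), (l, j)}" for l :: nat
  define Z where "Z l g = c l * (of_bool (g (l, i)) * (1 - of_bool (g (l, j))))"
    for l and g :: "nat \<times> nat \<Rightarrow> bool"
  have "prob_space.indep_vars (measure_pmf M) (\<lambda>_. count_space UNIV) (\<lambda>x X. X x) ({..<n} \<times> {..<m})"
    unfolding M_def by (rule indep_vars_Pi_pmf) simp
  then have "prob_space.indep_vars (measure_pmf M) (\<lambda>l. PiM (K l) (\<lambda>_. count_space UNIV))
      (\<lambda>l X. restrict X (K l)) {..<n}"
    by (rule prob_space.indep_vars_restrict[OF measure_pmf.prob_space_axioms])
      (use assms in \<open>auto simp: K_def disjoint_family_on_def\<close>)
  moreover have "Z l \<in> borel_measurable (PiM (K l) (\<lambda>_. count_space UNIV))" for l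
  proof -
    have "(\<lambda>g. f (g x)) \<in> borel_measurable (PiM (K l) (\<lambda>_. count_space UNIV))"
      if "x \<in> K l" for x and f :: "bool \<Rightarrow> real"
      by (rule measurable_compose[OF measurable_component_singleton[OF that] borel_measurable_count_space])
    then show ?thesis unfolding Z_def
      by (intro borel_measurable_times borel_measurable_const) (auto simp: K_def)
  qed
  ultimately have "prob_space.indep_vars (measure_pmf M) (\<lambda>_. borel)
      (\<lambda>l X. Z l (restrict X (K l))) {..<n}"
    by (rule prob_space.indep_vars_compose2[OF measure_pmf.prob_space_axioms])
  then show ?thesis unfolding M_def
    by (rule prob_space.indep_vars_cong[OF measure_pmf.prob_space_axioms, THEN iffD1, rotated 3])
      (auto simp: Z_def K_def)
qed

lemma Hoeffding_Pi_bernoulli_pair: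
  fixes Q :: "nat \<Rightarrow> nat \<Rightarrow> real" and A :: "nat \<Rightarrow> nat \<Rightarrow> bool"
  assumes "i < m" "j < m" "i \<noteq> j"
    and Q: "\<And>l i. 0 \<le> Q l i \<and> Q l i \<le> 1"
    and "0 \<le> \<epsilon>"
    and "0 < card {l. l < n \<and> A l i \<and> A l j}"
  shows "measure_pmf.prob (Pi_pmf ({..<n} \<times> {..<m}) False (\<lambda>(l, i). bernoulli_pmf (Q l i)))
      {X. \<epsilon> \<le> \<bar>(\<Sum>l<n. of_bool (A l i) * of_bool (A l j) * of_bool (X (l, i)) * (1 - of_bool (X (l, j))))
              - (\<Sum>l<n. of_bool (A l i) * of_bool (A l j) * (Q l i * (1 - Q l j)))\<bar>}
    \<le> 2 * exp (- 2 * \<epsilon>\<^sup>2 / real (card {l. l < n \<and> A l i \<and> A l j}))"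
proof -
  define M where "M = Pi_pmf ({..<n} \<times> {..<m}) False (\<lambda>(l, i). bernoulli_pmf (Q l i))"
  define c where "c l = (of_bool (A l i) * of_bool (A l j) :: real)" for l
  define Y where "Y l = (\<lambda>X :: nat \<times> nat \<Rightarrow> bool. c l * (of_bool (X (l, i)) * (1 - of_bool (X (l, j)))))"
    for l
  have E: "measure_pmf.expectation M (Y l) = c l * (Q l i * (1 - Q l j))" if "l < n" for l
    using expectation_Pi_bernoulli_pair[where Q=Q, OF that assms(1-3) Q]
    by (simp add: M_def Y_def integral_mult_right_zero)
  have "prob_space.indep_vars (measure_pmf M) (\<lambda>_. borel) Y {..<n}"
    unfolding M_def Y_def by (rule indep_vars_Pi_bernoulli_pair[OF assms(1,2)])
  then interpret Hoeffding_ineq "measure_pmf M" "{..<n}" Y "\<lambda>_. 0" c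
    "\<Sum>l<n. measure_pmf.expectation M (Y l)"
    by unfold_locales (auto simp: Y_def c_def intro!: AE_I2)
  have "(\<Sum>l<n. (c l)\<^sup>2) = (\<Sum>l<n. of_bool (A l i \<and> A l j))"
    by (intro sum.cong refl) (simp add: c_def)
  also have "\<dots> = real (card ({..<n} \<inter> {l. A l i \<and> A l j}))"
    by (rule sum_of_bool_eq) simp_all
  also have "{..<n} \<inter> {l. A l i \<and> A l j} = {l. l < n \<and> A l i \<and> A l j}" by auto
  finally have c_sum: "(\<Sum>l<n. (c l)\<^sup>2) = real (card {l. l < n \<and> A l i \<and> A l j})" .
  have "measure_pmf.prob M {X \<in> space M. \<epsilon> \<le> \<bar>(\<Sum>l<n. Y l X) - (\<Sum>l<n. measure_pmf.expectation M (Y l))\<bar>}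
      \<le> 2 * exp (- 2 * \<epsilon>\<^sup>2 / (\<Sum>l<n. (c l - 0)\<^sup>2))"
    by (rule Hoeffding_ineq_abs_ge) (use assms(5,6) c_sum in simp_all)
  moreover have "(\<Sum>l<n. measure_pmf.expectation M (Y l))
      = (\<Sum>l<n. of_bool (A l i) * of_bool (A l j) * (Q l i * (1 - Q l j)))"
    by (intro sum.cong refl) (simp add: E c_def)
  moreover have "(\<Sum>l<n. Y l X)
      = (\<Sum>l<n. of_bool (A l i) * of_bool (A l j) * of_bool (X (l, i)) * (1 - of_bool (X (l, j))))" for X
    by (intro sum.cong refl) (simp add: Y_def c_def mult.assoc)
  ultimately show ?thesis by (simp add: M_def c_sum)
qed

lemma sum_complete_diag_off_diag:
  "(\<Sum>k\<in>{..<m} - {i}. complete_diag m Q i k) = (\<Sum>k\<in>{..<m} - {i}. Q i k)"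
  by (intro sum.cong refl) (auto simp: complete_diag_def)

lemma sum_complete_diag:
  assumes "i < m"
  shows "(\<Sum>j<m. complete_diag m Q i j) = 1"
  using assms by (simp add: sum.remove[of _ i] sum_complete_diag_off_diag) (simp add: complete_diag_def)

lemma complete_diag_diff_diag:
  "complete_diag m Q i i - complete_diag m R i i
    = - (\<Sum>k\<in>{..<m} - {i}. complete_diag m Q i k - complete_diag m R i k)"
  by (simp add: sum_subtractf sum_complete_diag_off_diag) (simp add: complete_diag_def)

lemma resp_prob_pos: "0 < resp_prob \<theta> \<beta> l i"
  and resp_prob_less_one: "resp_prob \<theta> \<beta> l i < 1"
  by (simp_all add: resp_prob_def add_pos_pos)

lemma one_minus_resp_prob: "1 - resp_prob \<theta> \<beta> l i = exp (\<beta> i) / (exp (\<theta> l) + exp (\<beta> i))"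
proof -
  have "0 < exp (\<theta> l) + exp (\<beta> i)" by (simp add: add_pos_pos)
  then show ?thesis by (simp add: resp_prob_def field_simps)
qed

lemma resp_prob_detailed_balance:
  "exp (\<beta> i) * (resp_prob \<theta> \<beta> l i * (1 - resp_prob \<theta> \<beta> l j))
    = exp (\<beta> j) * (resp_prob \<theta> \<beta> l j * (1 - resp_prob \<theta> \<beta> l i))"
  unfolding one_minus_resp_prob by (simp add: resp_prob_def field_simps)

lemma gamma_min_set_finite:
  "finite {resp_prob \<theta> \<beta> l i * (1 - resp_prob \<theta> \<beta> l j) | l i j.
      l < n \<and> i < m \<and> j < m \<and> i \<noteq> j}"
proof (rule finite_subset)
  show "{resp_prob \<theta> \<beta> l i * (1 - resp_prob \<theta> \<beta> l j) | l i j. l < n \<and> i < m \<and> j < m \<and> i \<noteq> j}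
      \<subseteq> (\<lambda>(l, i, j). resp_prob \<theta> \<beta> l i * (1 - resp_prob \<theta> \<beta> l j)) ` ({..<n} \<times> {..<m} \<times> {..<m})"
    by force
qed simp

lemma gamma_min_le:
  "l < n \<Longrightarrow> i < m \<Longrightarrow> j < m \<Longrightarrow> i \<noteq> j \<Longrightarrow>
    gamma_min n m \<theta> \<beta> \<le> resp_prob \<theta> \<beta> l i * (1 - resp_prob \<theta> \<beta> l j)"
  unfolding gamma_min_def by (rule Min_le[OF gamma_min_set_finite]) blast

lemma gamma_min_pos: "1 \<le> n \<Longrightarrow> 2 \<le> m \<Longrightarrow> 0 < gamma_min n m \<theta> \<beta>"
  and gamma_min_le_one: "1 \<le> n \<Longrightarrow> 2 \<le> m \<Longrightarrow> gamma_min n m \<theta> \<beta> \<le> 1"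
proof -
  assume "1 \<le> n" "2 \<le> m"
  then have "resp_prob \<theta> \<beta> 0 0 * (1 - resp_prob \<theta> \<beta> 0 1) \<in> {resp_prob \<theta> \<beta> l i * (1 - resp_prob \<theta> \<beta> l j) | l i j.
      l < n \<and> i < m \<and> j < m \<and> i \<noteq> j}"
    by force
  then have "gamma_min n m \<theta> \<beta> \<in> {resp_prob \<theta> \<beta> l i * (1 - resp_prob \<theta> \<beta> l j) | l i j.
      l < n \<and> i < m \<and> j < m \<and> i \<noteq> j}"
    unfolding gamma_min_def by (intro Min_in[OF gamma_min_set_finite]) blast
  then obtain l i j where "gamma_min n m \<theta> \<beta> = resp_prob \<theta> \<beta> l i * (1 - resp_prob \<theta> \<beta> l j)"
    by blast
  moreover note resp_prob_pos[of \<theta> \<beta> l i] resp_prob_less_one[of \<theta> \<beta> l i]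
    resp_prob_pos[of \<theta> \<beta> l j] resp_prob_less_one[of \<theta> \<beta> l j]
  ultimately show "0 < gamma_min n m \<theta> \<beta>" "gamma_min n m \<theta> \<beta> \<le> 1"
    by (simp_all add: mult_le_one)
qed

lemma diff_le_kappa: "i < m \<Longrightarrow> j < m \<Longrightarrow> \<beta> i - \<beta> j \<le> kappa m \<beta>"
  unfolding kappa_def by (intro diff_mono Max_ge Min_le) auto

lemma kappa_nonneg: "0 < m \<Longrightarrow> 0 \<le> kappa m \<beta>"
  using diff_le_kappa[of 0 m 0 \<beta>] by simp

lemma sum_of_bool_mult_eq_sum_Collect:
  fixes f :: "nat \<Rightarrow> real"
  shows "(\<Sum>l<n. of_bool (A l i) * of_bool (A l j) * f l) = (\<Sum>l\<in>{l. l < n \<and> A l i \<and> A l j}. f l)"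
proof -
  have "{l. l < n \<and> A l i \<and> A l j} = {l \<in> {..<n}. A l i \<and> A l j}" by auto
  moreover have "(\<Sum>l\<in>{l \<in> {..<n}. A l i \<and> A l j}. f l) = (\<Sum>l<n. if A l i \<and> A l j then f l else 0)"
    by (rule sum.inter_filter) simp
  ultimately have "(\<Sum>l\<in>{l. l < n \<and> A l i \<and> A l j}. f l) = (\<Sum>l<n. if A l i \<and> A l j then f l else 0)"
    by simp
  also have "\<dots> = (\<Sum>l<n. of_bool (A l i) * of_bool (A l j) * f l)"
    by (intro sum.cong refl) simp
  finally show ?thesis ..
qed

lemma P_star_stochastic: "i < m \<Longrightarrow> (\<Sum>j<m. P_star n m p A \<theta> \<beta> i j) = 1"
  unfolding P_star_def by (rule sum_complete_diag)

lemma P_star_reversible: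
  "exp (\<beta> i) * P_star n m p A \<theta> \<beta> i j = exp (\<beta> j) * P_star n m p A \<theta> \<beta> j i"
proof (cases "i = j")
  case False
  have "exp (\<beta> i) * (of_bool (A l i) * of_bool (A l j) * (resp_prob \<theta> \<beta> l i * (1 - resp_prob \<theta> \<beta> l j)))
      = exp (\<beta> j) * (of_bool (A l j) * of_bool (A l i) * (resp_prob \<theta> \<beta> l j * (1 - resp_prob \<theta> \<beta> l i)))"
    for l
    using resp_prob_detailed_balance[of \<beta> i \<theta> l j] by (simp add: mult_ac)
  then show ?thesis using False
    by (simp add: P_star_def complete_diag_def sum_distrib_left mult_ac Int_ac)
qed simp

lemma P_emp_minus_P_star_off_diag:
  assumes "i \<noteq> j"
  shows "P_emp n m p A X i j - P_star n m p A \<theta> \<beta> i j =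
    ((\<Sum>l<n. of_bool (A l i) * of_bool (A l j) * of_bool (X (l, i)) * (1 - of_bool (X (l, j))))
     - (\<Sum>l<n. of_bool (A l i) * of_bool (A l j) * (resp_prob \<theta> \<beta> l i * (1 - resp_prob \<theta> \<beta> l j))))
    / (3/2 * real m * real n * p\<^sup>2)"
  using assms by (simp add: P_emp_def P_star_def complete_diag_def diff_divide_distrib)

context
  fixes n m :: nat and p :: real and \<theta> \<beta> :: "nat \<Rightarrow> real" and A :: "nat \<Rightarrow> nat \<Rightarrow> bool"
  assumes n_ge: "1 \<le> n" and m_ge: "2 \<le> m" and p_pos: "0 < p"
    and eventA: "\<And>i j. i < m \<Longrightarrow> j < m \<Longrightarrow> i \<noteq> j \<Longrightarrow>
        1/2 * real n * p\<^sup>2 \<le> real (card {l. l < n \<and> A l i \<and> A l j}) \<and>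
        real (card {l. l < n \<and> A l i \<and> A l j}) \<le> 3/2 * real n * p\<^sup>2"
begin

lemma P_star_off_diag_bounds:
  assumes "i < m" "j < m" "i \<noteq> j"
  shows "gamma_min n m \<theta> \<beta> / (3 * real m) \<le> P_star n m p A \<theta> \<beta> i j"
    and "P_star n m p A \<theta> \<beta> i j \<le> 1 / real m"
proof -
  define C where "C = {l. l < n \<and> A l i \<and> A l j}"
  define S where "S = (\<Sum>l\<in>C. resp_prob \<theta> \<beta> l i * (1 - resp_prob \<theta> \<beta> l j))"
  define d where "d = 3/2 * real m * real n * p\<^sup>2"
  have d_pos: "0 < d" using n_ge m_ge p_pos by (simp add: d_def)
  have P_eq: "P_star n m p A \<theta> \<beta> i j = S / d"
    unfolding S_def C_def d_def sum_of_bool_mult_eq_sum_Collect[symmetric]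
    using \<open>i \<noteq> j\<close> by (simp add: P_star_def complete_diag_def)
  have card_C: "1/2 * real n * p\<^sup>2 \<le> real (card C)" "real (card C) \<le> 3/2 * real n * p\<^sup>2"
    using eventA[OF assms] by (simp_all add: C_def)
  have "real (card C) * gamma_min n m \<theta> \<beta> \<le> S"
    unfolding S_def by (rule sum_bounded_below) (use gamma_min_le assms in \<open>auto simp: C_def\<close>)
  moreover have "1/2 * real n * p\<^sup>2 * gamma_min n m \<theta> \<beta> \<le> real (card C) * gamma_min n m \<theta> \<beta>"
    using card_C gamma_min_pos[OF n_ge m_ge, of \<theta> \<beta>] by (simp add: mult_right_mono)
  ultimately show "gamma_min n m \<theta> \<beta> / (3 * real m) \<le> P_star n m p A \<theta> \<beta> i j"
    using d_pos n_ge m_ge p_pos unfolding P_eq by (simp add: d_def field_simps)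
  have "S \<le> real (card C) * 1"
    unfolding S_def
  proof (rule sum_bounded_above)
    fix l
    show "resp_prob \<theta> \<beta> l i * (1 - resp_prob \<theta> \<beta> l j) \<le> 1"
      using resp_prob_pos[of \<theta> \<beta> l i] resp_prob_less_one[of \<theta> \<beta> l i]
        resp_prob_pos[of \<theta> \<beta> l j] resp_prob_less_one[of \<theta> \<beta> l j]
      by (simp add: mult_le_one)
  qed
  then show "P_star n m p A \<theta> \<beta> i j \<le> 1 / real m"
    using d_pos n_ge m_ge p_pos card_C unfolding P_eq by (simp add: d_def field_simps)
qed

lemma P_star_ge:
  assumes "i < m" "j < m"
  shows "gamma_min n m \<theta> \<beta> / (3 * real m) \<le> P_star n m p A \<theta> \<beta> i j"
proof (cases "i = j")
  case True
  have "(\<Sum>k\<in>{..<m} - {i}. P_star n m p A \<theta> \<beta> i k) \<le> (\<Sum>k\<in>{..<m} - {i}. 1 / real m)"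
    by (intro sum_mono P_star_off_diag_bounds(2)) (use assms in auto)
  also have "\<dots> = 1 - 1 / real m"
    using assms m_ge by (simp add: card_Diff_singleton of_nat_diff field_simps)
  finally have "1 / real m \<le> P_star n m p A \<theta> \<beta> i i"
    using P_star_stochastic[OF assms(1), of n p A \<theta> \<beta>] assms by (simp add: sum.remove[of _ i])
  moreover have "gamma_min n m \<theta> \<beta> / (3 * real m) \<le> 1 / real m"
    using gamma_min_le_one[OF n_ge m_ge, of \<theta> \<beta>] m_ge by (simp add: divide_simps)
  ultimately show ?thesis using True by simp
qed (use P_star_off_diag_bounds(1) assms in blast)

lemma P_star_minorized:
  assumes "i < m" "j < m"
  shows "gamma_min n m \<theta> \<beta> / (3 * exp (kappa m \<beta>)) * exp (\<beta> j)
    \<le> P_star n m p A \<theta> \<beta> i j * (\<Sum>k<m. exp (\<beta> k))"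
proof -
  have "real m * exp (\<beta> j) = (\<Sum>k<m. exp (\<beta> j))" by simp
  also have "\<dots> \<le> (\<Sum>k<m. exp (kappa m \<beta>) * exp (\<beta> k))"
  proof (rule sum_mono)
    fix k assume "k \<in> {..<m}"
    then have "\<beta> j \<le> kappa m \<beta> + \<beta> k" using diff_le_kappa[OF assms(2), of k \<beta>] by simp
    then show "exp (\<beta> j) \<le> exp (kappa m \<beta>) * exp (\<beta> k)" by (simp flip: exp_add)
  qed
  finally have "real m * exp (\<beta> j) / exp (kappa m \<beta>) \<le> (\<Sum>k<m. exp (\<beta> k))"
    by (simp add: field_simps sum_distrib_left)
  moreover have "0 \<le> gamma_min n m \<theta> \<beta> / (3 * real m)"
    using gamma_min_pos[OF n_ge m_ge, of \<theta> \<beta>] by simp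
  ultimately have "gamma_min n m \<theta> \<beta> / (3 * real m) * (real m * exp (\<beta> j) / exp (kappa m \<beta>))
      \<le> P_star n m p A \<theta> \<beta> i j * (\<Sum>k<m. exp (\<beta> k))"
    using P_star_ge[OF assms] by (intro mult_mono) auto
  then show ?thesis using m_ge by (simp add: field_simps)
qed

lemma spectral_gap_P_star_ge:
  "gamma_min n m \<theta> \<beta> / (3 * exp (kappa m \<beta>)) \<le> spectral_gap m (P_star n m p A \<theta> \<beta>)"
  using gamma_min_pos[OF n_ge m_ge, of \<theta> \<beta>]
  by (intro spectral_gap_ge_minorization[OF m_ge _ _ P_star_stochastic P_star_reversible P_star_minorized])
    simp_all

lemma prob_P_emp_deviation_ge:
  assumes "i < m" "j < m" "i \<noteq> j" "0 \<le> t"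
  shows "measure_pmf.prob (response_pmf n m \<theta> \<beta>)
      {X. t \<le> \<bar>P_emp n m p A X i j - P_star n m p A \<theta> \<beta> i j\<bar>}
    \<le> 2 * exp (- 3 * (real m)\<^sup>2 * real n * p\<^sup>2 * t\<^sup>2)"
proof -
  define d where "d = 3/2 * real m * real n * p\<^sup>2"
  define c where "c = real (card {l. l < n \<and> A l i \<and> A l j})"
  have d_pos: "0 < d" using n_ge m_ge p_pos by (simp add: d_def)
  have c: "1/2 * real n * p\<^sup>2 \<le> c" "c \<le> 3/2 * real n * p\<^sup>2"
    using eventA[OF assms(1-3)] by (simp_all add: c_def)
  have "0 < real n * p\<^sup>2" using n_ge p_pos by simp
  with c(1) have c_pos: "0 < c" by linarith
  have "{X. t \<le> \<bar>P_emp n m p A X i j - P_star n m p A \<theta> \<beta> i j\<bar>}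
      = {X. d * t \<le> \<bar>(\<Sum>l<n. of_bool (A l i) * of_bool (A l j) * of_bool (X (l, i)) * (1 - of_bool (X (l, j))))
        - (\<Sum>l<n. of_bool (A l i) * of_bool (A l j) * (resp_prob \<theta> \<beta> l i * (1 - resp_prob \<theta> \<beta> l j)))\<bar>}"
  proof -
    have "t \<le> \<bar>a / d\<bar> \<longleftrightarrow> d * t \<le> \<bar>a\<bar>" for a
      using d_pos by (simp add: abs_divide pos_le_divide_eq mult.commute)
    then show ?thesis unfolding P_emp_minus_P_star_off_diag[OF assms(3)] d_def[symmetric] by simp
  qed
  also have "measure_pmf.prob (response_pmf n m \<theta> \<beta>) \<dots> \<le> 2 * exp (- 2 * (d * t)\<^sup>2 / c)"
    unfolding response_pmf_def c_def
    by (rule Hoeffding_Pi_bernoulli_pair[OF assms(1-3)])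
      (use resp_prob_pos resp_prob_less_one d_pos \<open>0 \<le> t\<close> c_pos in \<open>auto simp: c_def intro: less_imp_le\<close>)
  also have "\<dots> \<le> 2 * exp (- 3 * (real m)\<^sup>2 * real n * p\<^sup>2 * t\<^sup>2)"
  proof -
    have "2 * (d * t)\<^sup>2 / (3/2 * real n * p\<^sup>2) \<le> 2 * (d * t)\<^sup>2 / c"
      using c c_pos by (intro divide_left_mono) auto
    moreover have "2 * (d * t)\<^sup>2 / (3/2 * real n * p\<^sup>2) = 3 * (real m)\<^sup>2 * real n * p\<^sup>2 * t\<^sup>2"
      using n_ge p_pos by (simp add: d_def field_simps power2_eq_square)
    ultimately show ?thesis by simp
  qed
  finally show ?thesis .
qed

lemma prob_P_emp_close_ge:
  assumes "0 \<le> t"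
  shows "1 - real m * real m * (2 * exp (- 3 * (real m)\<^sup>2 * real n * p\<^sup>2 * t\<^sup>2))
    \<le> measure_pmf.prob (response_pmf n m \<theta> \<beta>)
      {X. \<forall>i<m. \<forall>j<m. i \<noteq> j \<longrightarrow> \<bar>P_emp n m p A X i j - P_star n m p A \<theta> \<beta> i j\<bar> < t}"
    (is "_ \<le> measure_pmf.prob ?M ?close")
proof -
  define pairs where "pairs = {(i, j). i < m \<and> j < m \<and> i \<noteq> j}"
  define far where "far ij = {X. t \<le> \<bar>P_emp n m p A X (fst ij) (snd ij) - P_star n m p A \<theta> \<beta> (fst ij) (snd ij)\<bar>}"
    for ij
  have pairs_sub: "pairs \<subseteq> {..<m} \<times> {..<m}" by (auto simp: pairs_def)
  then have "card pairs \<le> card ({..<m} \<times> {..<m})" by (intro card_mono) simp_all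
  then have "real (card pairs) \<le> real m * real m" by (simp flip: of_nat_mult)
  have "measure_pmf.prob ?M (UNIV - ?close) \<le> (\<Sum>ij\<in>pairs. measure_pmf.prob ?M (far ij))"
  proof -
    have "UNIV - ?close = (\<Union>ij\<in>pairs. far ij)" by (force simp: pairs_def far_def not_less)
    then show ?thesis
      by (simp add: measure_pmf.finite_measure_subadditive_finite finite_subset[OF pairs_sub])
  qed
  also have "\<dots> \<le> (\<Sum>ij\<in>pairs. 2 * exp (- 3 * (real m)\<^sup>2 * real n * p\<^sup>2 * t\<^sup>2))"
    by (intro sum_mono) (use prob_P_emp_deviation_ge \<open>0 \<le> t\<close> in \<open>auto simp: pairs_def far_def\<close>)
  also have "\<dots> \<le> real m * real m * (2 * exp (- 3 * (real m)\<^sup>2 * real n * p\<^sup>2 * t\<^sup>2))"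
    using \<open>real (card pairs) \<le> real m * real m\<close> by (simp add: mult_right_mono)
  finally show ?thesis using measure_pmf.prob_compl[of ?close ?M] by simp
qed

lemma gap_minus_deviation_ge:
  assumes close: "\<And>i j. i < m \<Longrightarrow> j < m \<Longrightarrow> i \<noteq> j \<Longrightarrow>
      \<bar>P_emp n m p A X i j - P_star n m p A \<theta> \<beta> i j\<bar>
        \<le> gamma_min n m \<theta> \<beta> / (12 * real m * exp (2 * kappa m \<beta>))"
  shows "gamma_min n m \<theta> \<beta> / (6 * exp (2 * kappa m \<beta>))
    \<le> spectral_gap m (P_star n m p A \<theta> \<beta>) - spec_norm m (\<lambda>i j. P_emp n m p A X i j - P_star n m p A \<theta> \<beta> i j)"
proof -
  define \<gamma> where "\<gamma> = gamma_min n m \<theta> \<beta>"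
  define \<kappa> where "\<kappa> = kappa m \<beta>"
  have \<gamma>_pos: "0 < \<gamma>" unfolding \<gamma>_def by (rule gamma_min_pos[OF n_ge m_ge])
  have "spec_norm m (\<lambda>i j. P_emp n m p A X i j - P_star n m p A \<theta> \<beta> i j)
      \<le> 2 * (real m - 1) * (\<gamma> / (12 * real m * exp (2 * \<kappa>)))"
    using m_ge \<gamma>_pos close
    by (intro spec_norm_le_zero_row_sums)
      (simp_all add: \<gamma>_def \<kappa>_def P_emp_def P_star_def complete_diag_diff_diag)
  also have "\<dots> \<le> \<gamma> / (6 * exp (2 * \<kappa>))"
    using \<gamma>_pos m_ge by (simp add: field_simps)
  finally have "spec_norm m (\<lambda>i j. P_emp n m p A X i j - P_star n m p A \<theta> \<beta> i j) \<le> \<gamma> / (6 * exp (2 * \<kappa>))" .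
  moreover have "2 * (\<gamma> / (6 * exp (2 * \<kappa>))) \<le> \<gamma> / (3 * exp \<kappa>)"
    using \<gamma>_pos kappa_nonneg[of m \<beta>] m_ge by (simp add: \<kappa>_def frac_le)
  ultimately show ?thesis
    using spectral_gap_P_star_ge unfolding \<gamma>_def \<kappa>_def by linarith
qed

end

lemma sq_mul_exp_le_exp:
  fixes x :: real
  assumes "2 \<le> m" and "4320 * ln (real m) \<le> x"
  shows "real m * real m * (2 * exp (- (x / 48))) \<le> exp (- (x / 1440))"
proof -
  define L where "L = ln (real m) + ln (real m) + ln 2"
  have "exp L = real m * real m * 2"
    using assms(1) unfolding L_def by (simp only: exp_add) simp
  then have "real m * real m * (2 * exp (- (x / 48))) = exp L * exp (- (x / 48))"
    by simp
  also have "\<dots> = exp (L - x / 48)"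
    by (simp flip: exp_add)
  also have "\<dots> \<le> exp (- (x / 1440))"
  proof -
    have "ln 2 \<le> ln (real m)" "0 \<le> ln (real m)" using assms(1) by simp_all
    then show ?thesis using assms(2) by (simp add: L_def)
  qed
  finally show ?thesis .
qed

theorem mainTheorem11:
  fixes n m :: nat and p :: real
    and \<theta> \<beta> :: "nat \<Rightarrow> real" and A :: "nat \<Rightarrow> nat \<Rightarrow> bool"
  assumes "n \<ge> 1" and "m \<ge> 2" and "0 < p" and "p \<le> 1"
    and eventA: "\<And>i j. i < m \<Longrightarrow> j < m \<Longrightarrow> i \<noteq> j \<Longrightarrow>
        1/2 * real n * p^2 \<le> real (card {l. l < n \<and> A l i \<and> A l j}) \<and>
        real (card {l. l < n \<and> A l i \<and> A l j}) \<le> 3/2 * real n * p^2"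
    and big: "real n * p^2 \<ge> 30 * 12^2 * exp (4 * kappa m \<beta>) / (gamma_min n m \<theta> \<beta>)^2 * ln (real m)"
  shows "measure_pmf.prob (response_pmf n m \<theta> \<beta>)
      {X. spectral_gap m (P_star n m p A \<theta> \<beta>)
          - spec_norm m (\<lambda>i j. P_emp n m p A X i j - P_star n m p A \<theta> \<beta> i j)
        \<ge> gamma_min n m \<theta> \<beta> / (6 * exp (2 * kappa m \<beta>))}
    \<ge> 1 - exp (- ((gamma_min n m \<theta> \<beta>)^2 * real n * p^2 / (10 * 12^2 * exp (4 * kappa m \<beta>))))"
proof -
  define \<gamma> where "\<gamma> = gamma_min n m \<theta> \<beta>"
  define \<kappa> where "\<kappa> = kappa m \<beta>"
  define t where "t = \<gamma> / (12 * real m * exp (2 * \<kappa>))"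
  define x where "x = \<gamma>\<^sup>2 * real n * p\<^sup>2 / exp (4 * \<kappa>)"
  note hyps = assms(1-3) eventA
  have \<gamma>_pos: "0 < \<gamma>" unfolding \<gamma>_def by (rule gamma_min_pos[OF assms(1,2)])
  then have t_nonneg: "0 \<le> t" by (simp add: t_def)
  have "exp (4 * \<kappa>) = (exp (2 * \<kappa>))\<^sup>2" by (simp add: power2_eq_square flip: exp_add)
  then have exponent: "3 * (real m)\<^sup>2 * real n * p\<^sup>2 * t\<^sup>2 = x / 48"
    using assms(2) by (simp add: t_def x_def field_simps power2_eq_square)
  have "4320 * ln (real m) \<le> x"
    using mult_right_mono[OF big, of "\<gamma>\<^sup>2 / exp (4 * \<kappa>)"] \<gamma>_pos
    by (simp add: x_def \<gamma>_def \<kappa>_def field_simps)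
  then have "1 - exp (- (x / 1440)) \<le> 1 - real m * real m * (2 * exp (- (x / 48)))"
    using sq_mul_exp_le_exp[OF assms(2)] by simp
  also have "\<dots> \<le> measure_pmf.prob (response_pmf n m \<theta> \<beta>)
      {X. \<forall>i<m. \<forall>j<m. i \<noteq> j \<longrightarrow> \<bar>P_emp n m p A X i j - P_star n m p A \<theta> \<beta> i j\<bar> < t}"
    using prob_P_emp_close_ge[where A=A and \<theta>=\<theta> and \<beta>=\<beta>, OF hyps t_nonneg]
    by (simp add: exponent)
  also have "\<dots> \<le> measure_pmf.prob (response_pmf n m \<theta> \<beta>)
      {X. spectral_gap m (P_star n m p A \<theta> \<beta>)
          - spec_norm m (\<lambda>i j. P_emp n m p A X i j - P_star n m p A \<theta> \<beta> i j) \<ge> \<gamma> / (6 * exp (2 * \<kappa>))}"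
    using gap_minus_deviation_ge[where A=A and \<theta>=\<theta> and \<beta>=\<beta>, OF hyps] unfolding t_def \<gamma>_def \<kappa>_def
    by (intro measure_pmf.finite_measure_mono) (auto intro: less_imp_le)
  finally show ?thesis by (simp add: x_def \<gamma>_def \<kappa>_def mult.commute)
qed

end
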